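(* Let $\eta,\omega\in\mathbb{R}$ with $\omega\ne0$. For every $s>2$ and $f\in\mathcal{A}_S$, the operators $A_{s,c}(f):=\hat\rho(f)\,\hat\theta^{1+c}\,(1+\hat D^2+\mathcal{T}^2)^{-s/2}$ on $\hat H$ satisfy $A_{s,0}(f)=\lim_{c\downarrow0}A_{s,c}(f)$ in operator norm.
   Context: $\hat{H}=L^2(\mathbb{R}^2,da\,db)$ with elements $\xi(a)(b)$; $\mathcal{A}_S=\mathcal{S}_c(\mathbb{R}^2)$ the Schwartz functions $f(a)(b)$ with compact support in $a$; $(\hat\rho(f)\xi)(a)(b)=e^{-a}\int_{\mathbb{R}^2}da'db'\,f(a')(e^{-a}b')\xi(a-a')(b-b')$; multiplication operators $(\hat D\xi)(a)(b)=e^{-a}b\,\xi(a)(b)$, $(\mathcal{T}\xi)(a)(b)=(\eta+\omega e^{-a})\xi(a)(b)$, $(\hat\theta\xi)(a)(b)=e^{-a}\xi(a)(b)$. *)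

theory Defs
  imports "HOL-Analysis.Analysis"
begin

text \<open>Elements of H = L^2(R^2, da db) are represented by functions xi a b.\<close>

type_synonym fn2 = "real \<Rightarrow> real \<Rightarrow> complex"

text \<open>Iterated partial derivatives: True = derivative in the first variable a,
  False = derivative in the second variable b (applied from the end of the list).\<close>
fun pdiff :: "bool list \<Rightarrow> fn2 \<Rightarrow> fn2" where
  "pdiff [] f = f"
| "pdiff (d # ds) f =
     (if d then (\<lambda>a b. vector_derivative (\<lambda>t. pdiff ds f t b) (at a))
      else (\<lambda>a b. vector_derivative (\<lambda>t. pdiff ds f a t) (at b)))"

definition schwartz :: "fn2 \<Rightarrow> bool" where
  "schwartz f \<longleftrightarrow>
     (\<forall>ds. (\<forall>a b. (\<lambda>t. pdiff ds f t b) differentiable (at a)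
                 \<and> (\<lambda>t. pdiff ds f a t) differentiable (at b))
          \<and> (\<forall>N::nat. \<exists>C. \<forall>a b. (1 + a\<^sup>2 + b\<^sup>2) ^ N * cmod (pdiff ds f a b) \<le> C))"

definition A_S :: "fn2 set" where
  "A_S = {f. schwartz f \<and> (\<exists>R. \<forall>a b. \<bar>a\<bar> > R \<longrightarrow> f a b = 0)}"

definition l2sq :: "fn2 \<Rightarrow> ennreal" where
  "l2sq xi = (\<integral>\<^sup>+ p. ennreal ((cmod (xi (fst p) (snd p)))\<^sup>2) \<partial>(lborel :: (real \<times> real) measure))"

definition L2 :: "fn2 set" where
  "L2 = {xi. (\<lambda>p. xi (fst p) (snd p)) \<in> borel_measurable (lborel :: (real \<times> real) measure)
             \<and> l2sq xi < \<infinity>}"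

definition opnorm_sq :: "(fn2 \<Rightarrow> fn2) \<Rightarrow> ennreal" where
  "opnorm_sq T = (SUP xi \<in> {xi \<in> L2. l2sq xi \<le> 1}. l2sq (T xi))"

definition rho :: "fn2 \<Rightarrow> fn2 \<Rightarrow> fn2" where
  "rho f xi = (\<lambda>a b. complex_of_real (exp (- a)) *
      (\<integral>p. f (fst p) (exp (- a) * snd p) * xi (a - fst p) (b - snd p)
        \<partial>(lborel :: (real \<times> real) measure)))"

definition Dfun :: "real \<Rightarrow> real \<Rightarrow> real" where
  "Dfun a b = exp (- a) * b"

definition Tfun :: "real \<Rightarrow> real \<Rightarrow> real \<Rightarrow> real \<Rightarrow> real" where
  "Tfun \<eta> \<omega> a b = \<eta> + \<omega> * exp (- a)"

definition thetafun :: "real \<Rightarrow> real \<Rightarrow> real" where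
  "thetafun a b = exp (- a)"

definition mult_op :: "(real \<Rightarrow> real \<Rightarrow> real) \<Rightarrow> fn2 \<Rightarrow> fn2" where
  "mult_op m xi = (\<lambda>a b. complex_of_real (m a b) * xi a b)"

definition theta_pow :: "real \<Rightarrow> fn2 \<Rightarrow> fn2" where
  "theta_pow c = mult_op (\<lambda>a b. thetafun a b powr (1 + c))"

definition resolv :: "real \<Rightarrow> real \<Rightarrow> real \<Rightarrow> fn2 \<Rightarrow> fn2" where
  "resolv \<eta> \<omega> s = mult_op (\<lambda>a b. (1 + (Dfun a b)\<^sup>2 + (Tfun \<eta> \<omega> a b)\<^sup>2) powr (- s / 2))"

definition A_op :: "real \<Rightarrow> real \<Rightarrow> real \<Rightarrow> real \<Rightarrow> fn2 \<Rightarrow> fn2 \<Rightarrow> fn2" where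
  "A_op \<eta> \<omega> s c f = rho f \<circ> theta_pow c \<circ> resolv \<eta> \<omega> s"

end

theory Submission
  imports Defs "HOL-Probability.Sinc_Integral"
begin

text \<open>The representation \<open>rho f\<close> is a twisted convolution, and after a shear change of variables
  Young's inequality gives \<open>\<parallel>rho f \<zeta>\<parallel>\<^sub>2 \<le> \<parallel>f\<parallel>\<^sub>1 \<parallel>\<zeta>\<parallel>\<^sub>2\<close>. The operator \<open>A_op \<eta> \<omega> s c f\<close> is \<open>rho f\<close> composed
  with multiplication by the symbol \<open>\<theta>^(1 + c) (1 + D^2 + T^2)^(-s/2)\<close>, so its norm is at most \<open>\<parallel>f\<parallel>\<^sub>1\<close>
  times the supremum of the symbol. Because \<open>\<omega> \<noteq> 0\<close>, \<open>T^2\<close> dominates a multiple of \<open>\<theta>^2\<close>; hence the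
  symbol is bounded and the symbols at \<open>c\<close> and at \<open>0\<close> differ by \<open>O(c)\<close> uniformly, which makes the
  operator norm of the difference \<open>O(c)\<close>.\<close>

section \<open>Change of variables in the plane\<close>

lemma borel_measurable_fst_pair [measurable]: "fst \<in> borel_measurable (borel :: (real \<times> real) measure)"
  by (intro borel_measurable_continuous_onI continuous_intros)

lemma borel_measurable_snd_pair [measurable]: "snd \<in> borel_measurable (borel :: (real \<times> real) measure)"
  by (intro borel_measurable_continuous_onI continuous_intros)

lemma nn_integral_lborel_pair:
  fixes G :: "real \<times> real \<Rightarrow> ennreal"
  assumes "G \<in> borel_measurable borel"
  shows "(\<integral>\<^sup>+p. G p \<partial>lborel) = (\<integral>\<^sup>+x. \<integral>\<^sup>+y. G (x, y) \<partial>lborel \<partial>lborel)"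
proof -
  have "G \<in> borel_measurable (lborel \<Otimes>\<^sub>M lborel)"
    using assms by (simp add: lborel_prod)
  from lborel.nn_integral_fst[OF this] show ?thesis
    by (simp add: lborel_prod)
qed

lemma nn_integral_lborel_pair_affine:
  fixes G :: "real \<times> real \<Rightarrow> ennreal"
  assumes G[measurable]: "G \<in> borel_measurable borel" and "c1 \<noteq> 0" "c2 \<noteq> 0"
  shows "(\<integral>\<^sup>+p. G p \<partial>lborel)
    = ennreal (\<bar>c1\<bar> * \<bar>c2\<bar>) * (\<integral>\<^sup>+p. G (t1 + c1 * fst p, t2 + c2 * snd p) \<partial>lborel)"
proof -
  have [measurable]: "G \<in> borel_measurable (borel \<Otimes>\<^sub>M borel)"
    using G by (simp add: borel_prod)
  have "(\<integral>\<^sup>+p. G p \<partial>lborel) = (\<integral>\<^sup>+x. \<integral>\<^sup>+y. G (x, y) \<partial>lborel \<partial>lborel)"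
    by (rule nn_integral_lborel_pair[OF G])
  also have "\<dots> = (\<integral>\<^sup>+x. ennreal \<bar>c2\<bar> * \<integral>\<^sup>+y. G (x, t2 + c2 * y) \<partial>lborel \<partial>lborel)"
    by (intro nn_integral_cong nn_integral_real_affine[OF _ \<open>c2 \<noteq> 0\<close>]) measurable
  also have "\<dots> = ennreal \<bar>c2\<bar> * (\<integral>\<^sup>+x. \<integral>\<^sup>+y. G (x, t2 + c2 * y) \<partial>lborel \<partial>lborel)"
    by (rule nn_integral_cmult) measurable
  also have "(\<integral>\<^sup>+x. \<integral>\<^sup>+y. G (x, t2 + c2 * y) \<partial>lborel \<partial>lborel)
      = ennreal \<bar>c1\<bar> * (\<integral>\<^sup>+x. \<integral>\<^sup>+y. G (t1 + c1 * x, t2 + c2 * y) \<partial>lborel \<partial>lborel)"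
    by (rule nn_integral_real_affine[OF _ \<open>c1 \<noteq> 0\<close>]) measurable
  also have "(\<integral>\<^sup>+x. \<integral>\<^sup>+y. G (t1 + c1 * x, t2 + c2 * y) \<partial>lborel \<partial>lborel)
      = (\<integral>\<^sup>+p. G (t1 + c1 * fst p, t2 + c2 * snd p) \<partial>lborel)"
    by (subst nn_integral_lborel_pair) (simp_all, measurable)
  finally show ?thesis
    by (simp add: ennreal_mult mult_ac)
qed

lemma nn_integral_lborel_pair_shear:
  fixes G :: "real \<times> real \<Rightarrow> ennreal"
  assumes G[measurable]: "G \<in> borel_measurable borel" and [measurable]: "\<tau> \<in> borel_measurable borel"
  shows "(\<integral>\<^sup>+p. G (fst p - \<alpha>, snd p - \<tau> (fst p)) \<partial>lborel) = (\<integral>\<^sup>+p. G p \<partial>lborel)"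
proof -
  have G'[measurable]: "G \<in> borel_measurable (borel \<Otimes>\<^sub>M borel)"
    using G by (simp add: borel_prod)
  have translate: "(\<integral>\<^sup>+x. h x \<partial>lborel) = (\<integral>\<^sup>+x. h (x - t) \<partial>lborel)"
    if "h \<in> borel_measurable borel" for h :: "real \<Rightarrow> ennreal" and t
    using nn_integral_real_affine[OF that, of 1 "- t"] by simp
  have "(\<integral>\<^sup>+p. G (fst p - \<alpha>, snd p - \<tau> (fst p)) \<partial>lborel)
      = (\<integral>\<^sup>+x. \<integral>\<^sup>+y. G (x - \<alpha>, y - \<tau> x) \<partial>lborel \<partial>lborel)"
    by (subst nn_integral_lborel_pair) (simp_all, measurable)
  also have "\<dots> = (\<integral>\<^sup>+x. \<integral>\<^sup>+y. G (x - \<alpha>, y) \<partial>lborel \<partial>lborel)"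
    by (intro nn_integral_cong translate[symmetric]) measurable
  also have "\<dots> = (\<integral>\<^sup>+x. \<integral>\<^sup>+y. G (x, y) \<partial>lborel \<partial>lborel)"
  proof (rule translate[symmetric])
    show "(\<lambda>x. \<integral>\<^sup>+y. G (x, y) \<partial>lborel) \<in> borel_measurable borel"
      using lborel.borel_measurable_nn_integral_fst[of G lborel] G' by (simp add: lborel_prod)
  qed
  also have "\<dots> = (\<integral>\<^sup>+p. G p \<partial>lborel)"
    by (rule nn_integral_lborel_pair[OF G, symmetric])
  finally show ?thesis .
qed

text \<open>Declared only now: as a measurability rule it breaks the measurability proofs above.\<close>

lemma measurable_id_pair [measurable]:
  "(\<lambda>x. x) \<in> measurable (borel :: (real \<times> real) measure) (borel \<Otimes>\<^sub>M borel)"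
  by (simp add: borel_prod)

section \<open>The representation \<open>rho\<close>\<close>

definition uncurried :: "fn2 \<Rightarrow> real \<times> real \<Rightarrow> complex" where
  "uncurried \<xi> p = \<xi> (fst p) (snd p)"

definition l1norm :: "fn2 \<Rightarrow> ennreal" where
  "l1norm f = (\<integral>\<^sup>+q. ennreal (norm (uncurried f q)) \<partial>lborel)"

lemma nn_integral_weighted_Cauchy_Schwarz:
  fixes u v :: "'a \<Rightarrow> real"
  assumes [measurable]: "u \<in> borel_measurable M" "v \<in> borel_measurable M"
    and "\<And>x. 0 \<le> u x" "\<And>x. 0 \<le> v x"
  shows "(\<integral>\<^sup>+x. ennreal (u x * v x) \<partial>M)\<^sup>2
    \<le> (\<integral>\<^sup>+x. ennreal (u x) \<partial>M) * (\<integral>\<^sup>+x. ennreal (u x * (v x)\<^sup>2) \<partial>M)"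
proof -
  have "(\<integral>\<^sup>+x. ennreal (sqrt (u x)) * ennreal (sqrt (u x) * v x) \<partial>M)\<^sup>2
      \<le> (\<integral>\<^sup>+x. ennreal (sqrt (u x)) ^ 2 \<partial>M) * (\<integral>\<^sup>+x. ennreal (sqrt (u x) * v x) ^ 2 \<partial>M)"
    by (rule Cauchy_Schwarz_nn_integral) measurable
  moreover have "ennreal (sqrt (u x)) * ennreal (sqrt (u x) * v x) = ennreal (u x * v x)"
    and "ennreal (sqrt (u x)) ^ 2 = ennreal (u x)"
    and "ennreal (sqrt (u x) * v x) ^ 2 = ennreal (u x * (v x)\<^sup>2)" for x
    using assms(3,4)[of x]
    by (simp_all add: ennreal_mult'[symmetric] ennreal_power power_mult_distrib mult.assoc[symmetric])
  ultimately show ?thesis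
    by simp
qed

lemma norm_integral_le_nn_integral_norm:
  "ennreal (norm (integral\<^sup>L M g)) \<le> (\<integral>\<^sup>+x. ennreal (norm (g x)) \<partial>M)"
  by (cases "integrable M g") (auto simp: integral_norm_bound_ennreal not_integrable_integral_eq)

lemma rho_eq_integral:
  "rho f \<zeta> a b = complex_of_real (exp (- a)) *
     (\<integral>q. uncurried f (fst q, exp (- a) * snd q) * uncurried \<zeta> (a - fst q, b - snd q) \<partial>lborel)"
  by (simp add: rho_def uncurried_def)

text \<open>Rescaling the second variable by \<open>exp a\<close> absorbs the prefactor \<open>exp (- a)\<close> of \<open>rho\<close>.\<close>

lemma nn_integral_rho_integrand:
  assumes [measurable]: "uncurried f \<in> borel_measurable (borel \<Otimes>\<^sub>M borel)"
    "uncurried \<zeta> \<in> borel_measurable (borel \<Otimes>\<^sub>M borel)"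
  shows "(\<integral>\<^sup>+q. ennreal (norm (uncurried f (fst q, exp (- a) * snd q) * uncurried \<zeta> (a - fst q, b - snd q))) \<partial>lborel)
    = ennreal (exp a) *
      (\<integral>\<^sup>+q. ennreal (norm (uncurried f q) * norm (uncurried \<zeta> (a - fst q, b - exp a * snd q))) \<partial>lborel)"
proof -
  let ?G = "\<lambda>q. ennreal (norm (uncurried f (fst q, exp (- a) * snd q) * uncurried \<zeta> (a - fst q, b - snd q)))"
  have "?G \<in> borel_measurable borel"
    by measurable
  then have "(\<integral>\<^sup>+q. ?G q \<partial>lborel)
      = ennreal (\<bar>1\<bar> * \<bar>exp a\<bar>) * (\<integral>\<^sup>+q. ?G (0 + 1 * fst q, 0 + exp a * snd q) \<partial>lborel)"
    by (rule nn_integral_lborel_pair_affine) auto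
  also have "(\<lambda>q. ?G (0 + 1 * fst q, 0 + exp a * snd q))
      = (\<lambda>q. ennreal (norm (uncurried f q) * norm (uncurried \<zeta> (a - fst q, b - exp a * snd q))))"
    by (auto simp: norm_mult exp_minus field_simps)
  finally show ?thesis
    by simp
qed

lemma norm_rho_sq_le:
  assumes [measurable]: "uncurried f \<in> borel_measurable (borel \<Otimes>\<^sub>M borel)"
    "uncurried \<zeta> \<in> borel_measurable (borel \<Otimes>\<^sub>M borel)"
  shows "ennreal ((cmod (rho f \<zeta> a b))\<^sup>2) \<le> l1norm f *
    (\<integral>\<^sup>+q. ennreal (norm (uncurried f q) * (norm (uncurried \<zeta> (a - fst q, b - exp a * snd q)))\<^sup>2) \<partial>lborel)"
proof -
  let ?I = "\<integral>\<^sup>+q. ennreal (norm (uncurried f q) * norm (uncurried \<zeta> (a - fst q, b - exp a * snd q))) \<partial>lborel"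
  have "ennreal (cmod (rho f \<zeta> a b))
      \<le> ennreal (exp (- a)) * (\<integral>\<^sup>+q. ennreal (norm (uncurried f (fst q, exp (- a) * snd q)
                                     * uncurried \<zeta> (a - fst q, b - snd q))) \<partial>lborel)"
    unfolding rho_eq_integral norm_mult[of "complex_of_real _"] ennreal_mult'[OF norm_ge_zero]
    by (simp add: mult_left_mono norm_integral_le_nn_integral_norm del: norm_mult)
  also have "\<dots> = ?I"
    by (subst nn_integral_rho_integrand) (simp_all add: mult.assoc[symmetric] ennreal_mult[symmetric] exp_minus)
  finally have "ennreal (cmod (rho f \<zeta> a b)) ^ 2 \<le> ?I ^ 2"
    by (rule power_mono) simp
  also have "\<dots> \<le> l1norm f *
      (\<integral>\<^sup>+q. ennreal (norm (uncurried f q) * (norm (uncurried \<zeta> (a - fst q, b - exp a * snd q)))\<^sup>2) \<partial>lborel)"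
    unfolding l1norm_def by (rule nn_integral_weighted_Cauchy_Schwarz) auto
  finally show ?thesis
    by (simp add: ennreal_power)
qed

text \<open>After Tonelli, the integral over \<open>p\<close> of the pointwise bound is a sheared translate of \<open>l2sq \<zeta>\<close>.\<close>

lemma l2sq_rho_le:
  assumes [measurable]: "uncurried f \<in> borel_measurable (borel \<Otimes>\<^sub>M borel)"
    "uncurried \<zeta> \<in> borel_measurable (borel \<Otimes>\<^sub>M borel)"
  shows "l2sq (rho f \<zeta>) \<le> l1norm f * l1norm f * l2sq \<zeta>"
proof -
  define K where "K = l1norm f"
  define H where "H p q = K * (ennreal (norm (uncurried f q))
    * ennreal ((norm (uncurried \<zeta> (fst p - fst q, snd p - exp (fst p) * snd q)))\<^sup>2))"
    for p q :: "real \<times> real"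
  have "case_prod H \<in> borel_measurable (borel \<Otimes>\<^sub>M borel)"
    unfolding H_def by measurable
  then have H_measurable: "case_prod H \<in> borel_measurable (lborel \<Otimes>\<^sub>M lborel)"
    by (simp add: measurable_cong_sets[OF sets_pair_measure_cong[OF sets_lborel sets_lborel] refl])
  have "l2sq (rho f \<zeta>) \<le> (\<integral>\<^sup>+p. (\<integral>\<^sup>+q. H p q \<partial>lborel) \<partial>lborel)"
    unfolding l2sq_def
  proof (rule nn_integral_mono)
    fix p :: "real \<times> real"
    have "ennreal ((cmod (rho f \<zeta> (fst p) (snd p)))\<^sup>2) \<le> K *
      (\<integral>\<^sup>+q. ennreal (norm (uncurried f q)
         * (norm (uncurried \<zeta> (fst p - fst q, snd p - exp (fst p) * snd q)))\<^sup>2) \<partial>lborel)"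
      unfolding K_def by (rule norm_rho_sq_le) measurable
    also have "\<dots> = (\<integral>\<^sup>+q. H p q \<partial>lborel)"
      unfolding H_def by (subst nn_integral_cmult[symmetric]) (measurable, simp add: ennreal_mult)
    finally show "ennreal ((cmod (rho f \<zeta> (fst p) (snd p)))\<^sup>2) \<le> (\<integral>\<^sup>+q. H p q \<partial>lborel)" .
  qed
  also have "\<dots> = (\<integral>\<^sup>+q. (\<integral>\<^sup>+p. H p q \<partial>lborel) \<partial>lborel)"
    by (rule lborel_pair.Fubini'[OF H_measurable, symmetric])
  also have "\<dots> = (\<integral>\<^sup>+q. (K * l2sq \<zeta>) * ennreal (norm (uncurried f q)) \<partial>lborel)"
  proof (rule nn_integral_cong)
    fix q :: "real \<times> real"
    let ?G = "\<lambda>p. ennreal ((norm (uncurried \<zeta> p))\<^sup>2)"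
    have "(\<integral>\<^sup>+p. H p q \<partial>lborel) = K * ennreal (norm (uncurried f q))
        * (\<integral>\<^sup>+p. ?G (fst p - fst q, snd p - exp (fst p) * snd q) \<partial>lborel)"
      unfolding H_def by (subst nn_integral_cmult[symmetric]) (measurable, simp add: mult.assoc)
    also have "(\<integral>\<^sup>+p. ?G (fst p - fst q, snd p - exp (fst p) * snd q) \<partial>lborel) = l2sq \<zeta>"
      by (subst nn_integral_lborel_pair_shear) (measurable, simp add: l2sq_def uncurried_def)
    finally show "(\<integral>\<^sup>+p. H p q \<partial>lborel) = (K * l2sq \<zeta>) * ennreal (norm (uncurried f q))"
      by (simp add: mult_ac)
  qed
  also have "\<dots> = K * K * l2sq \<zeta>"
    unfolding K_def l1norm_def by (subst nn_integral_cmult) (measurable, simp add: mult_ac)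
  finally show ?thesis
    unfolding K_def .
qed

lemma L2_uncurried_measurable: "\<xi> \<in> L2 \<Longrightarrow> uncurried \<xi> \<in> borel_measurable (borel \<Otimes>\<^sub>M borel)"
  unfolding L2_def uncurried_def by (simp only: mem_Collect_eq measurable_lborel2 borel_prod[symmetric])

lemma L2_l2sq_finite: "\<xi> \<in> L2 \<Longrightarrow> l2sq \<xi> < \<infinity>"
  unfolding L2_def by simp

lemma uncurried_mult_op_measurable:
  assumes [measurable]: "uncurried \<xi> \<in> borel_measurable (borel \<Otimes>\<^sub>M borel)"
    "(\<lambda>p. m (fst p) (snd p)) \<in> borel_measurable (borel :: (real \<times> real) measure)"
  shows "uncurried (mult_op m \<xi>) \<in> borel_measurable (borel \<Otimes>\<^sub>M borel)"
proof -
  have [measurable]: "uncurried \<xi> \<in> borel_measurable borel"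
    using assms(1) by (simp add: borel_prod)
  have "uncurried (mult_op m \<xi>) = (\<lambda>p. complex_of_real (m (fst p) (snd p)) * uncurried \<xi> p)"
    by (auto simp: uncurried_def mult_op_def)
  also have "\<dots> \<in> borel_measurable borel"
    by measurable
  finally show ?thesis
    by (simp add: borel_prod)
qed

lemma l2sq_mult_op_le:
  assumes "\<And>a b. \<bar>m a b\<bar> \<le> M" and [measurable]: "uncurried \<xi> \<in> borel_measurable (borel \<Otimes>\<^sub>M borel)"
  shows "l2sq (mult_op m \<xi>) \<le> ennreal (M\<^sup>2) * l2sq \<xi>"
proof -
  have "l2sq (mult_op m \<xi>) \<le> (\<integral>\<^sup>+p. ennreal (M\<^sup>2) * ennreal ((cmod (uncurried \<xi> p))\<^sup>2) \<partial>lborel)"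
    unfolding l2sq_def
  proof (intro nn_integral_mono)
    fix p :: "real \<times> real"
    have "\<bar>m (fst p) (snd p)\<bar>\<^sup>2 \<le> M\<^sup>2"
      using assms(1) by (intro power_mono) auto
    then have "(cmod (mult_op m \<xi> (fst p) (snd p)))\<^sup>2 \<le> M\<^sup>2 * (cmod (uncurried \<xi> p))\<^sup>2"
      by (simp add: mult_op_def uncurried_def norm_mult power_mult_distrib mult_right_mono)
    then show "ennreal ((cmod (mult_op m \<xi> (fst p) (snd p)))\<^sup>2)
        \<le> ennreal (M\<^sup>2) * ennreal ((cmod (uncurried \<xi> p))\<^sup>2)"
      by (simp add: ennreal_mult[symmetric] ennreal_leI)
  qed
  also have "\<dots> = ennreal (M\<^sup>2) * l2sq \<xi>"
    by (subst nn_integral_cmult) (measurable, simp add: l2sq_def uncurried_def)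
  finally show ?thesis .
qed

lemma rho_integrand_integrable:
  assumes [measurable]: "uncurried f \<in> borel_measurable (borel \<Otimes>\<^sub>M borel)"
    "uncurried \<zeta> \<in> borel_measurable (borel \<Otimes>\<^sub>M borel)"
    and "l1norm f < \<infinity>" and f_bounded: "\<And>q. norm (uncurried f q) \<le> C" and "l2sq \<zeta> < \<infinity>"
  shows "integrable lborel (\<lambda>q. uncurried f (fst q, exp (- a) * snd q) * uncurried \<zeta> (a - fst q, b - snd q))"
proof (rule integrableI_bounded)
  show "(\<lambda>q. uncurried f (fst q, exp (- a) * snd q) * uncurried \<zeta> (a - fst q, b - snd q)) \<in> borel_measurable lborel"
    by measurable
  let ?\<zeta>' = "\<lambda>q. norm (uncurried \<zeta> (a - fst q, b - exp a * snd q))"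
  let ?I = "\<integral>\<^sup>+q. ennreal (norm (uncurried f q) * ?\<zeta>' q) \<partial>lborel"
  let ?J = "\<integral>\<^sup>+q. ennreal (norm (uncurried f q) * (?\<zeta>' q)\<^sup>2) \<partial>lborel"
  let ?X = "\<integral>\<^sup>+q. ennreal ((?\<zeta>' q)\<^sup>2) \<partial>lborel"
  have "l2sq \<zeta> = ennreal (\<bar>-1\<bar> * \<bar>- exp a\<bar>) *
      (\<integral>\<^sup>+q. ennreal ((norm (uncurried \<zeta> (a + (-1) * fst q, b + (- exp a) * snd q)))\<^sup>2) \<partial>lborel)"
    by (subst nn_integral_lborel_pair_affine[symmetric]) (measurable, auto simp: l2sq_def uncurried_def)
  then have "ennreal (exp a) * ?X < \<infinity>"
    using \<open>l2sq \<zeta> < \<infinity>\<close> by simp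
  then have "?X < \<infinity>"
    by (auto simp add: ennreal_mult_less_top)
  have "C \<ge> 0"
    using f_bounded[of 0] norm_ge_zero[of "uncurried f 0"] by linarith
  have "?J \<le> (\<integral>\<^sup>+q. ennreal C * ennreal ((?\<zeta>' q)\<^sup>2) \<partial>lborel)"
    using \<open>C \<ge> 0\<close> f_bounded
    by (intro nn_integral_mono) (simp add: ennreal_mult[symmetric] ennreal_leI mult_right_mono)
  also have "\<dots> = ennreal C * ?X"
    by (rule nn_integral_cmult) measurable
  also have "\<dots> < \<infinity>"
    using \<open>?X < \<infinity>\<close> by (simp add: ennreal_mult_less_top)
  finally have "?J < \<infinity>" .
  have "?I ^ 2 \<le> l1norm f * ?J"
    unfolding l1norm_def by (rule nn_integral_weighted_Cauchy_Schwarz) auto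
  also have "\<dots> < \<infinity>"
    using \<open>l1norm f < \<infinity>\<close> \<open>?J < \<infinity>\<close> by (simp add: ennreal_mult_less_top)
  finally have "?I < \<infinity>"
    by (simp add: power_less_top_ennreal)
  then show "(\<integral>\<^sup>+q. ennreal (norm (uncurried f (fst q, exp (- a) * snd q) * uncurried \<zeta> (a - fst q, b - snd q))) \<partial>lborel) < \<infinity>"
    by (simp add: nn_integral_rho_integrand ennreal_mult_less_top)
qed

lemma rho_diff:
  assumes "integrable lborel (\<lambda>q. uncurried f (fst q, exp (- a) * snd q) * uncurried \<zeta>\<^sub>1 (a - fst q, b - snd q))"
    and "integrable lborel (\<lambda>q. uncurried f (fst q, exp (- a) * snd q) * uncurried \<zeta>\<^sub>2 (a - fst q, b - snd q))"
  shows "rho f \<zeta>\<^sub>1 a b - rho f \<zeta>\<^sub>2 a b = rho f (\<zeta>\<^sub>1 - \<zeta>\<^sub>2) a b"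
  unfolding rho_eq_integral right_diff_distrib[symmetric] Bochner_Integration.integral_diff[OF assms, symmetric]
  by (simp add: uncurried_def right_diff_distrib)

lemma rho_mult_op_diff:
  assumes f: "uncurried f \<in> borel_measurable (borel \<Otimes>\<^sub>M borel)"
      "l1norm f < \<infinity>" "\<And>q. norm (uncurried f q) \<le> C"
    and m\<^sub>1: "(\<lambda>p. m\<^sub>1 (fst p) (snd p)) \<in> borel_measurable (borel :: (real \<times> real) measure)"
      "\<And>a b. \<bar>m\<^sub>1 a b\<bar> \<le> M\<^sub>1"
    and m\<^sub>2: "(\<lambda>p. m\<^sub>2 (fst p) (snd p)) \<in> borel_measurable (borel :: (real \<times> real) measure)"
      "\<And>a b. \<bar>m\<^sub>2 a b\<bar> \<le> M\<^sub>2"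
    and "\<xi> \<in> L2"
  shows "rho f (mult_op m\<^sub>1 \<xi>) - rho f (mult_op m\<^sub>2 \<xi>) = rho f (mult_op (\<lambda>a b. m\<^sub>1 a b - m\<^sub>2 a b) \<xi>)"
proof -
  note \<xi>_measurable = L2_uncurried_measurable[OF \<open>\<xi> \<in> L2\<close>]
  have finite: "l2sq (mult_op m \<xi>) < \<infinity>" if "\<And>a b. \<bar>m a b\<bar> \<le> M" for m M
  proof (rule le_less_trans)
    show "l2sq (mult_op m \<xi>) \<le> ennreal (M\<^sup>2) * l2sq \<xi>"
      by (rule l2sq_mult_op_le[OF that \<xi>_measurable])
    show "ennreal (M\<^sup>2) * l2sq \<xi> < \<infinity>"
      using L2_l2sq_finite[OF \<open>\<xi> \<in> L2\<close>] by (simp add: ennreal_mult_less_top)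
  qed
  have "rho f (mult_op m\<^sub>1 \<xi>) a b - rho f (mult_op m\<^sub>2 \<xi>) a b = rho f (mult_op m\<^sub>1 \<xi> - mult_op m\<^sub>2 \<xi>) a b" for a b
  proof (rule rho_diff)
    show "integrable lborel (\<lambda>q. uncurried f (fst q, exp (- a) * snd q) * uncurried (mult_op m\<^sub>1 \<xi>) (a - fst q, b - snd q))"
      by (rule rho_integrand_integrable[OF f(1) uncurried_mult_op_measurable[OF \<xi>_measurable m\<^sub>1(1)]
            f(2,3) finite[OF m\<^sub>1(2)]])
    show "integrable lborel (\<lambda>q. uncurried f (fst q, exp (- a) * snd q) * uncurried (mult_op m\<^sub>2 \<xi>) (a - fst q, b - snd q))"
      by (rule rho_integrand_integrable[OF f(1) uncurried_mult_op_measurable[OF \<xi>_measurable m\<^sub>2(1)]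
            f(2,3) finite[OF m\<^sub>2(2)]])
  qed
  moreover have "mult_op m\<^sub>1 \<xi> - mult_op m\<^sub>2 \<xi> = mult_op (\<lambda>a b. m\<^sub>1 a b - m\<^sub>2 a b) \<xi>"
    by (simp add: fun_eq_iff mult_op_def left_diff_distrib)
  ultimately show ?thesis
    by (simp add: fun_eq_iff)
qed

lemma opnorm_sq_cong_L2: "(\<And>\<xi>. \<xi> \<in> L2 \<Longrightarrow> T \<xi> = T' \<xi>) \<Longrightarrow> opnorm_sq T = opnorm_sq T'"
  unfolding opnorm_sq_def by (intro SUP_cong) auto

lemma opnorm_sq_rho_mult_op_le:
  assumes [measurable]: "uncurried f \<in> borel_measurable (borel \<Otimes>\<^sub>M borel)"
    "(\<lambda>p. m (fst p) (snd p)) \<in> borel_measurable (borel :: (real \<times> real) measure)"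
    and m_bounded: "\<And>a b. \<bar>m a b\<bar> \<le> M"
  shows "opnorm_sq (rho f \<circ> mult_op m) \<le> l1norm f * l1norm f * ennreal (M\<^sup>2)"
  unfolding opnorm_sq_def
proof (rule SUP_least)
  fix \<xi> assume "\<xi> \<in> {\<xi> \<in> L2. l2sq \<xi> \<le> 1}"
  then have \<xi>_measurable: "uncurried \<xi> \<in> borel_measurable (borel \<Otimes>\<^sub>M borel)" and "l2sq \<xi> \<le> 1"
    by (auto intro: L2_uncurried_measurable)
  have "l2sq ((rho f \<circ> mult_op m) \<xi>) \<le> l1norm f * l1norm f * l2sq (mult_op m \<xi>)"
    by (simp add: l2sq_rho_le uncurried_mult_op_measurable \<xi>_measurable)
  also have "\<dots> \<le> l1norm f * l1norm f * (ennreal (M\<^sup>2) * 1)"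
  proof (intro mult_left_mono)
    show "l2sq (mult_op m \<xi>) \<le> ennreal (M\<^sup>2) * 1"
      using l2sq_mult_op_le[OF m_bounded \<xi>_measurable] \<open>l2sq \<xi> \<le> 1\<close>
      by (meson mult_left_mono order_trans zero_le)
  qed simp
  finally show "l2sq ((rho f \<circ> mult_op m) \<xi>) \<le> l1norm f * l1norm f * ennreal (M\<^sup>2)"
    by simp
qed

section \<open>Schwartz functions\<close>

lemma norm_diff_le_of_vector_derivative_bound:
  fixes g :: "real \<Rightarrow> 'a::real_normed_vector"
  assumes "\<And>t. g differentiable (at t)" and "\<And>t. norm (vector_derivative g (at t)) \<le> B"
  shows "norm (g x - g y) \<le> B * \<bar>x - y\<bar>"
proof -
  have "norm (g x - g y) \<le> B * norm (x - y)"
  proof (rule differentiable_bound[where S = UNIV and f' = "\<lambda>t h. h *\<^sub>R vector_derivative g (at t)"])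
    fix t :: real
    show "(g has_derivative (\<lambda>h. h *\<^sub>R vector_derivative g (at t))) (at t within UNIV)"
      using assms(1)[of t] by (simp add: vector_derivative_works has_vector_derivative_def)
    show "onorm (\<lambda>h::real. h *\<^sub>R vector_derivative g (at t)) \<le> B"
      using assms(2)[of t] by (simp add: onorm_scaleR_left[OF bounded_linear_ident] onorm_id)
  qed auto
  then show ?thesis
    by simp
qed

lemma schwartz_Lipschitz:
  assumes "schwartz f"
  obtains B\<^sub>1 B\<^sub>2 where "\<And>x y b. norm (f x b - f y b) \<le> B\<^sub>1 * \<bar>x - y\<bar>"
    "\<And>x y a. norm (f a x - f a y) \<le> B\<^sub>2 * \<bar>x - y\<bar>"
proof -
  have "\<And>a b. (\<lambda>t. f t b) differentiable (at a)" "\<And>a b. (\<lambda>t. f a t) differentiable (at b)"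
    using assms unfolding schwartz_def by (metis pdiff.simps(1))+
  moreover obtain B\<^sub>1 where "\<And>a b. (1 + a\<^sup>2 + b\<^sup>2) ^ 0 * cmod (pdiff [True] f a b) \<le> B\<^sub>1"
    using assms unfolding schwartz_def by blast
  moreover obtain B\<^sub>2 where "\<And>a b. (1 + a\<^sup>2 + b\<^sup>2) ^ 0 * cmod (pdiff [False] f a b) \<le> B\<^sub>2"
    using assms unfolding schwartz_def by blast
  ultimately show ?thesis
    by (intro that norm_diff_le_of_vector_derivative_bound) auto
qed

lemma schwartz_continuous:
  assumes "schwartz f"
  shows "continuous_on UNIV (uncurried f)"
proof -
  obtain B\<^sub>1 B\<^sub>2 where B: "\<And>x y b. norm (f x b - f y b) \<le> B\<^sub>1 * \<bar>x - y\<bar>"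
    "\<And>x y a. norm (f a x - f a y) \<le> B\<^sub>2 * \<bar>x - y\<bar>"
    using schwartz_Lipschitz[OF assms] by blast
  have dist_le: "dist (uncurried f p) (uncurried f p\<^sub>0) \<le> B\<^sub>1 * \<bar>fst p - fst p\<^sub>0\<bar> + B\<^sub>2 * \<bar>snd p - snd p\<^sub>0\<bar>"
    for p p\<^sub>0 :: "real \<times> real"
    using norm_triangle_ineq[of "f (fst p) (snd p) - f (fst p\<^sub>0) (snd p)" "f (fst p\<^sub>0) (snd p) - f (fst p\<^sub>0) (snd p\<^sub>0)"]
      B(1)[where x = "fst p" and y = "fst p\<^sub>0" and b = "snd p"]
      B(2)[where x = "snd p" and y = "snd p\<^sub>0" and a = "fst p\<^sub>0"]
    by (simp add: uncurried_def dist_norm)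
  show ?thesis
    unfolding continuous_on_def
  proof
    fix p\<^sub>0 :: "real \<times> real"
    have "((\<lambda>p. uncurried f p - uncurried f p\<^sub>0) \<longlongrightarrow> 0) (at p\<^sub>0 within UNIV)"
    proof (rule Lim_null_comparison)
      show "\<forall>\<^sub>F p in at p\<^sub>0 within UNIV.
          norm (uncurried f p - uncurried f p\<^sub>0) \<le> B\<^sub>1 * \<bar>fst p - fst p\<^sub>0\<bar> + B\<^sub>2 * \<bar>snd p - snd p\<^sub>0\<bar>"
        using dist_le by (simp add: dist_norm)
      have "((\<lambda>p. B\<^sub>1 * \<bar>fst p - fst p\<^sub>0\<bar> + B\<^sub>2 * \<bar>snd p - snd p\<^sub>0\<bar>) \<longlongrightarrow>
          B\<^sub>1 * \<bar>fst p\<^sub>0 - fst p\<^sub>0\<bar> + B\<^sub>2 * \<bar>snd p\<^sub>0 - snd p\<^sub>0\<bar>) (at p\<^sub>0 within UNIV)"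
        by (intro tendsto_intros)
      then show "((\<lambda>p. B\<^sub>1 * \<bar>fst p - fst p\<^sub>0\<bar> + B\<^sub>2 * \<bar>snd p - snd p\<^sub>0\<bar>) \<longlongrightarrow> 0) (at p\<^sub>0 within UNIV)"
        by simp
    qed
    then show "(uncurried f \<longlongrightarrow> uncurried f p\<^sub>0) (at p\<^sub>0 within UNIV)"
      by (rule LIM_zero_cancel)
  qed
qed

lemma schwartz_measurable:
  "schwartz f \<Longrightarrow> uncurried f \<in> borel_measurable (borel \<Otimes>\<^sub>M borel)"
  using borel_measurable_continuous_onI[OF schwartz_continuous] by (simp add: borel_prod)

lemma schwartz_bounded:
  assumes "schwartz f"
  obtains C where "\<And>q. norm (uncurried f q) \<le> C"
proof -
  obtain C where "\<And>a b. (1 + a\<^sup>2 + b\<^sup>2) ^ 0 * cmod (pdiff [] f a b) \<le> C"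
    using assms unfolding schwartz_def by blast
  then show ?thesis
    by (intro that[of C]) (simp add: uncurried_def)
qed

lemma schwartz_decay:
  assumes "schwartz f"
  obtains C where "0 \<le> C" "\<And>x y. norm (uncurried f (x, y)) \<le> C * (inverse (1 + x\<^sup>2) * inverse (1 + y\<^sup>2))"
proof -
  obtain C where C: "\<And>a b. (1 + a\<^sup>2 + b\<^sup>2) ^ 2 * cmod (pdiff [] f a b) \<le> C"
    using assms unfolding schwartz_def by blast
  have "0 \<le> C"
    using C[of 0 0] norm_ge_zero[of "f 0 0"] by (simp del: norm_ge_zero)
  moreover have "norm (f x y) \<le> C / ((1 + x\<^sup>2) * (1 + y\<^sup>2))" for x y :: real
  proof -
    have "(1 + x\<^sup>2 + y\<^sup>2) ^ 2 = (1 + x\<^sup>2) * (1 + y\<^sup>2) + (x\<^sup>2 + y\<^sup>2 + x\<^sup>2 * x\<^sup>2 + x\<^sup>2 * y\<^sup>2 + y\<^sup>2 * y\<^sup>2)"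
      by (simp add: power2_eq_square algebra_simps)
    then have "(1 + x\<^sup>2) * (1 + y\<^sup>2) \<le> (1 + x\<^sup>2 + y\<^sup>2) ^ 2"
      by simp
    then have "(1 + x\<^sup>2) * (1 + y\<^sup>2) * norm (f x y) \<le> C"
      using mult_right_mono[OF _ norm_ge_zero[of "f x y"]] C[of x y] by (simp del: norm_ge_zero) (meson order_trans)
    then show ?thesis
      by (simp add: pos_le_divide_eq mult.commute add_pos_nonneg)
  qed
  ultimately show ?thesis
    by (intro that[of C]) (simp_all add: uncurried_def divide_inverse)
qed

lemma nn_integral_inverse_1_plus_square_finite:
  "(\<integral>\<^sup>+x. ennreal (inverse (1 + x\<^sup>2)) \<partial>lborel) < \<infinity>"
proof -
  have "integrable lborel (\<lambda>x::real. inverse (1 + x\<^sup>2))"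
    using integrable_inverse_1_plus_square by (simp add: set_integrable_def)
  from integrableD(2)[OF this] show ?thesis
    by (simp add: less_top)
qed

lemma schwartz_l1norm_finite:
  assumes "schwartz f"
  shows "l1norm f < \<infinity>"
proof -
  obtain C where "0 \<le> C" and C: "\<And>x y. norm (uncurried f (x, y)) \<le> C * (inverse (1 + x\<^sup>2) * inverse (1 + y\<^sup>2))"
    using schwartz_decay[OF assms] by blast
  define I where "I = (\<integral>\<^sup>+x. ennreal (inverse (1 + x\<^sup>2)) \<partial>lborel)"
  have "l1norm f \<le> (\<integral>\<^sup>+q. ennreal (C * (inverse (1 + (fst q)\<^sup>2) * inverse (1 + (snd q)\<^sup>2))) \<partial>lborel)"
    unfolding l1norm_def by (intro nn_integral_mono ennreal_leI) (metis C prod.collapse)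
  also have "\<dots> = (\<integral>\<^sup>+x. \<integral>\<^sup>+y. ennreal C * ennreal (inverse (1 + x\<^sup>2)) * ennreal (inverse (1 + y\<^sup>2)) \<partial>lborel \<partial>lborel)"
    by (subst nn_integral_lborel_pair) (measurable, simp add: ennreal_mult \<open>0 \<le> C\<close> add_pos_nonneg mult.assoc)
  also have "\<dots> = (\<integral>\<^sup>+x. (ennreal C * I) * ennreal (inverse (1 + x\<^sup>2)) \<partial>lborel)"
    unfolding I_def by (subst nn_integral_cmult) (measurable, simp add: mult_ac)
  also have "\<dots> = ennreal C * I * I"
    unfolding I_def by (rule nn_integral_cmult) measurable
  also have "\<dots> < \<infinity>"
    using nn_integral_inverse_1_plus_square_finite unfolding I_def by (simp add: ennreal_mult_less_top)
  finally show ?thesis .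
qed

section \<open>The symbol of \<open>A_op\<close>\<close>

lemma sq_le_1_plus_sq_affine:
  fixes \<eta> \<omega> u :: real
  shows "\<omega>\<^sup>2 / (4 * (1 + \<eta>\<^sup>2)) * u\<^sup>2 \<le> 1 + (\<eta> + \<omega> * u)\<^sup>2"
proof -
  have "(\<omega> * u)\<^sup>2 \<le> 2 * (\<eta> + \<omega> * u)\<^sup>2 + 2 * \<eta>\<^sup>2"
    using zero_le_power2[of "\<eta> + \<omega> * u + \<eta>"] by (simp add: power2_eq_square algebra_simps)
  also have "\<dots> \<le> 4 * (1 + \<eta>\<^sup>2) * (1 + (\<eta> + \<omega> * u)\<^sup>2)"
    by (simp add: algebra_simps add_nonneg_nonneg)
  finally show ?thesis
    by (simp add: divide_le_eq power_mult_distrib mult.commute add_pos_nonneg)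
qed

lemma mult_exp_neg_le_1: "x * exp (- x) \<le> (1 :: real)"
  using exp_ge_add_one_self[of x] by (simp add: exp_minus field_simps del: exp_ge_add_one_self)

lemma exp_minus_1_le_mult_exp: "exp x - 1 \<le> x * exp (x :: real)"
  using exp_ge_add_one_self[of "- x"] mult_right_mono[of "1 - x" "exp (- x)" "exp x"]
  by (simp add: exp_minus field_simps)

context
  fixes a \<kappa> R :: real
  assumes \<kappa>: "0 < \<kappa>" and R: "0 \<le> R" "R \<le> 1" "R * (\<kappa> * (exp (- a))\<^sup>2) \<le> 1"
begin

lemma exp_neg_mult_le: "exp (- a) * R \<le> max 1 (1 / \<kappa>)"
proof (cases "0 \<le> a")
  case True
  then have "exp (- a) * R \<le> 1 * 1"
    using R by (intro mult_mono) auto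
  then show ?thesis
    by simp
next
  case False
  then have "exp (- a) * R * \<kappa> \<le> R * (\<kappa> * (exp (- a))\<^sup>2)"
    using R \<kappa> by (simp add: power2_eq_square mult_ac mult_left_mono)
  then have "exp (- a) * R \<le> 1 / \<kappa>"
    using R(3) \<kappa> by (simp add: pos_le_divide_eq)
  then show ?thesis
    by simp
qed

text \<open>For \<open>a \<ge> 0\<close> the difference is controlled by \<open>a exp (- a) \<le> 1\<close>; for \<open>a < 0\<close> the growth of
  \<open>exp (- (1 + c) a)\<close> is beaten by the decay \<open>R \<le> exp (2 a) / \<kappa>\<close>, which needs \<open>c < 1\<close>.\<close>

lemma exp_neg_powr_diff_mult_le:
  assumes c: "0 < c" "c \<le> 1 / 2"
  shows "\<bar>(exp (- a) powr (1 + c) - exp (- a)) * R\<bar> \<le> c * max 1 (2 / \<kappa>)"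
proof -
  have diff_eq: "exp (- a) powr (1 + c) - exp (- a) = exp (- a) * (exp (- (c * a)) - 1)"
    by (simp add: exp_powr_real exp_add[symmetric] algebra_simps)
  show ?thesis
  proof (cases "0 \<le> a")
    case True
    have "\<bar>exp (- (c * a)) - 1\<bar> \<le> c * a"
      using exp_ge_add_one_self[of "- (c * a)"] True c by simp
    then have "\<bar>exp (- a) * (exp (- (c * a)) - 1) * R\<bar> \<le> exp (- a) * (c * a) * 1"
      unfolding abs_mult using R by (intro mult_mono mult_left_mono) auto
    also have "\<dots> = c * (a * exp (- a))"
      by simp
    also have "\<dots> \<le> c * max 1 (2 / \<kappa>)"
      using mult_exp_neg_le_1[of a] c by (intro mult_left_mono) auto
    finally show ?thesis
      unfolding diff_eq .
  next
    case False
    define t where "t = - a"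
    have "t > 0"
      using False by (simp add: t_def)
    have R_le: "R \<le> exp (- (2 * t)) / \<kappa>"
      using R(3) \<kappa> by (simp add: t_def pos_le_divide_eq exp_minus power2_eq_square exp_add[symmetric] field_simps)
    have "exp (c * t) \<ge> 1"
      using \<open>t > 0\<close> c by simp
    then have "\<bar>exp (- a) * (exp (- (c * a)) - 1) * R\<bar> = exp t * (exp (c * t) - 1) * R"
      using R by (simp add: abs_mult t_def)
    also have "\<dots> \<le> exp t * (c * t * exp (c * t)) * (exp (- (2 * t)) / \<kappa>)"
      using exp_minus_1_le_mult_exp[of "c * t"] R_le R \<open>t > 0\<close> c
      by (intro mult_mono mult_left_mono) (auto simp: mult_ac)
    also have "\<dots> = c / \<kappa> * (t * exp ((c - 1) * t))"
      by (simp add: exp_add[symmetric] algebra_simps)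
    also have "\<dots> \<le> c / \<kappa> * (t * exp (- (t / 2)))"
      using c \<kappa> \<open>t > 0\<close> by (intro mult_left_mono) (auto simp: algebra_simps mult_right_mono)
    also have "\<dots> = 2 * c / \<kappa> * (t / 2 * exp (- (t / 2)))"
      by simp
    also have "\<dots> \<le> 2 * c / \<kappa>"
      using mult_exp_neg_le_1[of "t / 2"] c \<kappa> by (intro mult_left_le) auto
    also have "\<dots> = c * (2 / \<kappa>)"
      by simp
    also have "\<dots> \<le> c * max 1 (2 / \<kappa>)"
      using c by (intro mult_left_mono) auto
    finally show ?thesis
      unfolding diff_eq .
  qed
qed

end

lemma resolvent_symbol_bounds:
  fixes \<eta> \<omega> s a b :: real
  assumes "2 \<le> s"
  defines "R \<equiv> (1 + (Dfun a b)\<^sup>2 + (Tfun \<eta> \<omega> a b)\<^sup>2) powr (- s / 2)"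
  shows "0 \<le> R" "R \<le> 1" "R * (\<omega>\<^sup>2 / (4 * (1 + \<eta>\<^sup>2)) * (exp (- a))\<^sup>2) \<le> 1"
proof -
  define X where "X = 1 + (Dfun a b)\<^sup>2 + (Tfun \<eta> \<omega> a b)\<^sup>2"
  have "1 \<le> X"
    by (simp add: X_def)
  have "R \<le> X powr (- 1)"
    unfolding R_def X_def[symmetric] using assms \<open>1 \<le> X\<close> by (intro powr_mono) auto
  then have R_le: "R * X \<le> 1"
    using \<open>1 \<le> X\<close> by (simp add: powr_neg_one pos_le_divide_eq)
  show "0 \<le> R"
    by (simp add: R_def)
  then show "R \<le> 1"
    using R_le \<open>1 \<le> X\<close> mult_left_mono[of 1 X R] by simp
  have "\<omega>\<^sup>2 / (4 * (1 + \<eta>\<^sup>2)) * (exp (- a))\<^sup>2 \<le> X"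
    using sq_le_1_plus_sq_affine[of \<omega> \<eta> "exp (- a)"] zero_le_power2[of "Dfun a b"]
    unfolding X_def Tfun_def by linarith
  then show "R * (\<omega>\<^sup>2 / (4 * (1 + \<eta>\<^sup>2)) * (exp (- a))\<^sup>2) \<le> 1"
    using R_le \<open>0 \<le> R\<close> by (meson mult_left_mono order_trans)
qed

definition A_symbol :: "real \<Rightarrow> real \<Rightarrow> real \<Rightarrow> real \<Rightarrow> real \<Rightarrow> real \<Rightarrow> real" where
  "A_symbol \<eta> \<omega> s c a b = thetafun a b powr (1 + c) * (1 + (Dfun a b)\<^sup>2 + (Tfun \<eta> \<omega> a b)\<^sup>2) powr (- s / 2)"

lemma A_op_eq_rho_mult_op: "A_op \<eta> \<omega> s c f = rho f \<circ> mult_op (A_symbol \<eta> \<omega> s c)"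
  by (simp add: A_op_def theta_pow_def resolv_def mult_op_def A_symbol_def fun_eq_iff mult.assoc)

lemma A_symbol_measurable [measurable]:
  "(\<lambda>p. A_symbol \<eta> \<omega> s c (fst p) (snd p)) \<in> borel_measurable (borel :: (real \<times> real) measure)"
  unfolding A_symbol_def thetafun_def Dfun_def Tfun_def by measurable

text \<open>This is where \<open>\<omega> \<noteq> 0\<close> enters: \<open>T^2\<close> grows like \<open>\<omega>\<^sup>2 exp (- 2 a)\<close> and so tames the growth of
  \<open>\<theta>^(1 + c)\<close> as \<open>a \<rightarrow> -\<infinity>\<close>.\<close>

lemma A_symbol_bounds:
  assumes "\<omega> \<noteq> 0" "2 \<le> s"
  obtains L where "\<And>a b. \<bar>A_symbol \<eta> \<omega> s 0 a b\<bar> \<le> L"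
    "\<And>c a b. 0 < c \<Longrightarrow> c \<le> 1 / 2 \<Longrightarrow> \<bar>A_symbol \<eta> \<omega> s c a b - A_symbol \<eta> \<omega> s 0 a b\<bar> \<le> c * L"
proof
  define \<kappa> where "\<kappa> = \<omega>\<^sup>2 / (4 * (1 + \<eta>\<^sup>2))"
  have "0 < \<kappa>"
    using assms(1) by (simp add: \<kappa>_def add_pos_nonneg)
  define R where "R a b = (1 + (Dfun a b)\<^sup>2 + (Tfun \<eta> \<omega> a b)\<^sup>2) powr (- s / 2)" for a b
  have R_bounds: "0 \<le> R a b" "R a b \<le> 1" "R a b * (\<kappa> * (exp (- a))\<^sup>2) \<le> 1" for a b
    using resolvent_symbol_bounds[OF assms(2), of a b \<eta> \<omega>] unfolding R_def \<kappa>_def by auto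
  have symbol_eq: "A_symbol \<eta> \<omega> s c a b = exp (- a) powr (1 + c) * R a b" for c a b
    by (simp add: A_symbol_def R_def thetafun_def)
  show "\<bar>A_symbol \<eta> \<omega> s 0 a b\<bar> \<le> max 1 (2 / \<kappa>)" for a b
  proof -
    have "1 / \<kappa> \<le> 2 / \<kappa>"
      using \<open>0 < \<kappa>\<close> by (simp add: divide_right_mono)
    then show ?thesis
      using exp_neg_mult_le[OF \<open>0 < \<kappa>\<close> R_bounds] R_bounds(1)
      by (simp add: symbol_eq abs_mult le_max_iff_disj) (meson order_trans)
  qed
  show "\<bar>A_symbol \<eta> \<omega> s c a b - A_symbol \<eta> \<omega> s 0 a b\<bar> \<le> c * max 1 (2 / \<kappa>)"
    if "0 < c" "c \<le> 1 / 2" for c a b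
    using exp_neg_powr_diff_mult_le[OF \<open>0 < \<kappa>\<close> R_bounds that]
    by (simp add: symbol_eq left_diff_distrib)
qed

lemma tendsto_at_right_0_if_le_quadratic:
  fixes g :: "real \<Rightarrow> ennreal"
  assumes "\<forall>\<^sub>F c in at_right 0. g c \<le> ennreal (C * c\<^sup>2)"
  shows "(g \<longlongrightarrow> 0) (at_right 0)"
proof (rule tendsto_sandwich[where f = "\<lambda>_. 0", OF _ assms])
  have "((\<lambda>c. ennreal (C * c\<^sup>2)) \<longlongrightarrow> ennreal (C * 0\<^sup>2)) (at_right 0)"
    by (intro tendsto_ennrealI tendsto_intros)
  then show "((\<lambda>c. ennreal (C * c\<^sup>2)) \<longlongrightarrow> 0) (at_right 0)"
    by simp
qed auto

lemma A_op_norm_estimates: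
  assumes "\<omega> \<noteq> 0" "2 \<le> s" "f \<in> A_S"
  obtains K where "opnorm_sq (A_op \<eta> \<omega> s 0 f) \<le> ennreal K"
    "\<And>c. 0 < c \<Longrightarrow> c \<le> 1 / 2 \<Longrightarrow>
      opnorm_sq (\<lambda>\<xi>. A_op \<eta> \<omega> s c f \<xi> - A_op \<eta> \<omega> s 0 f \<xi>) \<le> ennreal (K * c\<^sup>2)"
proof -
  have "schwartz f"
    using \<open>f \<in> A_S\<close> by (simp add: A_S_def)
  note f_measurable = schwartz_measurable[OF this] and f_integrable = schwartz_l1norm_finite[OF this]
  obtain C where f_bounded: "\<And>q. norm (uncurried f q) \<le> C"
    using schwartz_bounded[OF \<open>schwartz f\<close>] by blast
  obtain k where k: "l1norm f = ennreal k" "0 \<le> k"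
    using f_integrable by (cases "l1norm f") auto
  obtain L where L: "\<And>a b. \<bar>A_symbol \<eta> \<omega> s 0 a b\<bar> \<le> L"
    "\<And>c a b. 0 < c \<Longrightarrow> c \<le> 1 / 2 \<Longrightarrow> \<bar>A_symbol \<eta> \<omega> s c a b - A_symbol \<eta> \<omega> s 0 a b\<bar> \<le> c * L"
    using A_symbol_bounds[OF assms(1,2)] by metis
  have "opnorm_sq (A_op \<eta> \<omega> s 0 f) \<le> l1norm f * l1norm f * ennreal (L\<^sup>2)"
    unfolding A_op_eq_rho_mult_op by (intro opnorm_sq_rho_mult_op_le f_measurable A_symbol_measurable L(1))
  then have "opnorm_sq (A_op \<eta> \<omega> s 0 f) \<le> ennreal (k * k * L\<^sup>2)"
    by (simp add: k ennreal_mult[symmetric])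
  moreover have "opnorm_sq (\<lambda>\<xi>. A_op \<eta> \<omega> s c f \<xi> - A_op \<eta> \<omega> s 0 f \<xi>) \<le> ennreal (k * k * L\<^sup>2 * c\<^sup>2)"
    if "0 < c" "c \<le> 1 / 2" for c
  proof -
    let ?m = "\<lambda>a b. A_symbol \<eta> \<omega> s c a b - A_symbol \<eta> \<omega> s 0 a b"
    have L_c: "\<bar>A_symbol \<eta> \<omega> s c a b\<bar> \<le> c * L + L" for a b
      using L(1)[of a b] L(2)[OF that, of a b] by linarith
    have "opnorm_sq (\<lambda>\<xi>. A_op \<eta> \<omega> s c f \<xi> - A_op \<eta> \<omega> s 0 f \<xi>) = opnorm_sq (rho f \<circ> mult_op ?m)"
      unfolding A_op_eq_rho_mult_op
      by (intro opnorm_sq_cong_L2) (simp add: rho_mult_op_diff[OF f_measurable f_integrable f_bounded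
            A_symbol_measurable L_c A_symbol_measurable L(1)])
    also have "\<dots> \<le> l1norm f * l1norm f * ennreal ((c * L)\<^sup>2)"
      using L(2)[OF that] by (intro opnorm_sq_rho_mult_op_le f_measurable) measurable
    finally show ?thesis
      using \<open>0 \<le> k\<close> by (simp add: k ennreal_mult[symmetric] power_mult_distrib mult_ac)
  qed
  ultimately show thesis
    by (rule that)
qed

theorem mainTheorem6:
  fixes \<eta> \<omega> s :: real and f :: fn2
  assumes "\<omega> \<noteq> 0" and "s > 2" and "f \<in> A_S"
  shows "opnorm_sq (A_op \<eta> \<omega> s 0 f) < \<infinity>
    \<and> ((\<lambda>c. opnorm_sq (\<lambda>xi. A_op \<eta> \<omega> s c f xi - A_op \<eta> \<omega> s 0 f xi)) \<longlongrightarrow> 0) (at_right 0)"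
proof -
  obtain K where K: "opnorm_sq (A_op \<eta> \<omega> s 0 f) \<le> ennreal K"
    "\<And>c. 0 < c \<Longrightarrow> c \<le> 1 / 2 \<Longrightarrow>
      opnorm_sq (\<lambda>\<xi>. A_op \<eta> \<omega> s c f \<xi> - A_op \<eta> \<omega> s 0 f \<xi>) \<le> ennreal (K * c\<^sup>2)"
    using A_op_norm_estimates[of \<omega> s f \<eta>] assms by (metis less_imp_le)
  have "opnorm_sq (A_op \<eta> \<omega> s 0 f) < \<infinity>"
    using K(1) by (simp add: le_less_trans)
  moreover have "((\<lambda>c. opnorm_sq (\<lambda>xi. A_op \<eta> \<omega> s c f xi - A_op \<eta> \<omega> s 0 f xi)) \<longlongrightarrow> 0) (at_right 0)"
    using K(2) by (intro tendsto_at_right_0_if_le_quadratic[where C = K] eventually_at_rightI[of 0 "1 / 2"]) auto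
  ultimately show ?thesis ..
qed

end
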